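(* Let $G$ be a connected threshold graph with binary string $b=0^{s_1}1^{t_1}\cdots 0^{s_k}1^{t_k}$ (all $s_i,t_i\geq 1$). Let $m=2k$ if $s_1=1$ and $m=2k+1$ if $s_1\geq 2$. Then the anti-regular graph $A_m$ is an induced subgraph of $G$, and in either case $A_m$ is the largest anti-regular graph contained in $G$ as an induced subgraph.
   Context: Threshold graphs from binary strings: given $b=b_1b_2\cdots b_n\in\{0,1\}^n$ with $b_1=0$, let $G_1$ be a single vertex, and for $j=2,\ldots,n$ obtain $G_j$ from $G_{j-1}$ by adding a new vertex which is adjacent to all previous vertices if $b_j=1$ and isolated if $b_j=0$; $G(b)=G_n$ and $b$ is called the binary string of $G(b)$. The notation $0^{s}$ (resp. $1^t$) denotes $s$ consecutive zeros (resp. $t$ consecutive ones). The anti-regular graph $A_m$ is $G(b)$ with $b=0101\cdots01$ (length $m$) when $m$ is even and $b=00101\cdots01$ (length $m$) when $m$ is odd. *)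

theory Defs
  imports Main
begin

text \<open>Binary strings are lists of booleans (True = 1, False = 0), indexed from 0,
so the paper's b_j is b ! (j-1). The threshold graph G(b) has vertex set
{0..<length b}; for i < j, vertices i and j are adjacent iff b ! j = 1
(vertex j was added as a dominating vertex).\<close>

definition thr_adj :: "bool list \<Rightarrow> nat \<Rightarrow> nat \<Rightarrow> bool" where
  "thr_adj b i j \<longleftrightarrow> i \<noteq> j \<and> i < length b \<and> j < length b \<and> b ! (max i j)"

definition graph_connected :: "nat \<Rightarrow> (nat \<Rightarrow> nat \<Rightarrow> bool) \<Rightarrow> bool" where
  "graph_connected n E \<longleftrightarrow> n \<ge> 1 \<and>
     (\<forall>u<n. \<forall>v<n. (\<lambda>x y. x < n \<and> y < n \<and> E x y)\<^sup>*\<^sup>* u v)"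

text \<open>Binary string of the anti-regular graph A_m: for m even 0101...01,
for m odd 00101...01 (for m = 1 this is the string 0).\<close>
definition antireg_string :: "nat \<Rightarrow> bool list" where
  "antireg_string m =
     (if even m then map (\<lambda>i. odd i) [0..<m]
      else map (\<lambda>i. i \<ge> 1 \<and> even i) [0..<m])"

definition antireg_adj :: "nat \<Rightarrow> nat \<Rightarrow> nat \<Rightarrow> bool" where
  "antireg_adj m = thr_adj (antireg_string m)"

definition induced_subgraph_of ::
  "nat \<Rightarrow> (nat \<Rightarrow> nat \<Rightarrow> bool) \<Rightarrow> nat \<Rightarrow> (nat \<Rightarrow> nat \<Rightarrow> bool) \<Rightarrow> bool" where
  "induced_subgraph_of nH H nG G \<longleftrightarrow>
     (\<exists>f. inj_on f {..<nH} \<and> f ` {..<nH} \<subseteq> {..<nG} \<and>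
          (\<forall>u<nH. \<forall>v<nH. G (f u) (f v) \<longleftrightarrow> H u v))"

text \<open>The string 0^{s_1} 1^{t_1} ... 0^{s_k} 1^{t_k}, with s_{i+1} = s i, t_{i+1} = t i.\<close>
definition block_string :: "nat \<Rightarrow> (nat \<Rightarrow> nat) \<Rightarrow> (nat \<Rightarrow> nat) \<Rightarrow> bool list" where
  "block_string k s t = concat (map (\<lambda>i. replicate (s i) False @ replicate (t i) True) [0..<k])"

end

(* Inside a vertex set S of a threshold graph G(b), the two least vertices are twins
   (they have the same neighbours outside the pair), and so are any x < y in S with b
   constant from x to y. In A_n the only twins are 0 and 1. Hence in an induced copy of
   A_n in G(b) the vertices other than the least one lie in pairwise different runs of
   tl b, so n <= r + 1 where r is the number of runs of tl b. Conversely, vertex 0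
   together with one position from each run of tl b spans A_(r+1) when b ends in 1.
   For b = 0^s1 1^t1 ... 0^sk 1^tk the tail tl b has 2k runs, or 2k - 1 if s1 = 1. *)

theory Submission
  imports Defs "HOL-Library.Sublist"
begin

lemma thr_adj_Cons_eq: "thr_adj (x # xs) = thr_adj (y # xs)"
  by (intro ext) (auto simp: thr_adj_def max_def nth_Cons')

lemma subseq_strict_mono_index:
  assumes "subseq a b"
  obtains f where "strict_mono_on {..<length a} f"
    and "\<forall>i<length a. f i < length b \<and> b ! f i = a ! i"
  using assms
proof (induction a b arbitrary: thesis rule: list_emb.induct)
  case (list_emb_Nil ys)
  then show ?case by (simp add: strict_mono_on_def)
next
  case (list_emb_Cons xs ys y)
  show ?case
  proof (rule list_emb_Cons.IH)
    fix f assume "strict_mono_on {..<length xs} f"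
      and "\<forall>i<length xs. f i < length ys \<and> ys ! f i = xs ! i"
    then show thesis
      by (intro list_emb_Cons.prems[of "Suc \<circ> f"]) (auto simp: strict_mono_on_def)
  qed
next
  case (list_emb_Cons2 x y xs ys)
  show ?case
  proof (rule list_emb_Cons2.IH)
    fix f assume f: "strict_mono_on {..<length xs} f"
      "\<forall>i<length xs. f i < length ys \<and> ys ! f i = xs ! i"
    let ?g = "\<lambda>i. case i of 0 \<Rightarrow> 0 | Suc i \<Rightarrow> Suc (f i)"
    show thesis
    proof (rule list_emb_Cons2.prems[of ?g])
      show "strict_mono_on {..<length (x # xs)} ?g"
        using f(1) by (auto simp: strict_mono_on_def split: nat.split)
      show "\<forall>i<length (x # xs). ?g i < length (y # ys) \<and> (y # ys) ! ?g i = (x # xs) ! i"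
        using f(2) list_emb_Cons2.hyps by (auto split: nat.split)
    qed
  qed
qed

lemma induced_subgraph_of_thr_adj_subseq:
  assumes "subseq a b"
  shows "induced_subgraph_of (length a) (thr_adj a) (length b) (thr_adj b)"
proof -
  obtain f where mono: "strict_mono_on {..<length a} f"
    and f: "\<forall>i<length a. f i < length b \<and> b ! f i = a ! i"
    using subseq_strict_mono_index[OF assms] by blast
  have inj: "inj_on f {..<length a}"
    using mono by (rule strict_mono_on_imp_inj_on)
  have "thr_adj b (f u) (f v) \<longleftrightarrow> thr_adj a u v" if "u < length a" "v < length a" for u v
  proof -
    have "max (f u) (f v) = f (max u v)"
      using that by (simp add: max_def strict_mono_on_less_eq[OF mono])
    then show ?thesis
      using that f inj_on_eq_iff[OF inj] by (auto simp: thr_adj_def max_def)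
  qed
  then show ?thesis
    unfolding induced_subgraph_of_def using inj f by blast
qed

lemma length_antireg_string [simp]: "length (antireg_string n) = n"
  by (simp add: antireg_string_def)

lemma nth_antireg_string:
  "i < n \<Longrightarrow> antireg_string n ! i \<longleftrightarrow> 0 < i \<and> even (n - 1 - i)"
  by (auto simp: antireg_string_def odd_pos)

lemma nth_antireg_string_Suc_neq:
  "0 < i \<Longrightarrow> Suc i < n \<Longrightarrow> antireg_string n ! i \<noteq> antireg_string n ! Suc i"
  by (simp add: nth_antireg_string)

lemma antireg_string_alternating:
  fixes xs :: "bool list"
  assumes "xs \<noteq> [] \<Longrightarrow> last xs"
    and "\<And>i. Suc i < length xs \<Longrightarrow> xs ! i \<noteq> xs ! Suc i"
  shows "antireg_string (Suc (length xs)) = False # xs"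
proof -
  have "xs ! i \<longleftrightarrow> even (length xs - 1 - i)" if "i < length xs" for i
    using that
  proof (induction "length xs - 1 - i" arbitrary: i)
    case 0
    then have "xs \<noteq> []" "i = length xs - 1" by auto
    then show ?case using assms(1) by (simp add: last_conv_nth)
  next
    case (Suc d)
    then have "Suc i < length xs" by linarith
    with Suc have "xs ! Suc i \<longleftrightarrow> even (length xs - 1 - Suc i)" by simp
    moreover have "xs ! i \<noteq> xs ! Suc i" using assms(2) \<open>Suc i < length xs\<close> by simp
    ultimately show ?case using \<open>Suc i < length xs\<close> by auto
  qed
  then show ?thesis
    by (intro nth_equalityI) (auto simp: nth_antireg_string nth_Cons')
qed

lemma subseq_remdups_adj: "subseq (remdups_adj xs) xs"
  by (induction xs rule: remdups_adj.induct) auto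

lemma remdups_adj_append_neq:
  assumes "xs \<noteq> []" "ys \<noteq> []" "last xs \<noteq> hd ys"
  shows "remdups_adj (xs @ ys) = remdups_adj xs @ remdups_adj ys"
  using assms
  by (induction xs rule: remdups_adj.induct) (auto simp: neq_Nil_conv)

lemma length_remdups_adj_Cons:
  "length (remdups_adj (x # xs)) = length (remdups_adj xs) + (if xs \<noteq> [] \<and> hd xs = x then 0 else 1)"
proof (cases "remdups_adj xs")
  case (Cons y ys)
  then have "xs \<noteq> []" "hd xs = y"
    using hd_remdups_adj[of xs] by auto
  then show ?thesis
    using Cons by (simp add: remdups_adj_Cons)
qed (simp add: remdups_adj_Cons)

text \<open>The number of the maximal constant segment (run) of xs that contains position i,
  counting from 0.\<close>
definition run_index :: "'a list \<Rightarrow> nat \<Rightarrow> nat" where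
  "run_index xs i = length (remdups_adj (take (Suc i) xs)) - 1"

lemma run_index_Suc:
  assumes "Suc i < length xs"
  shows "run_index xs (Suc i) = run_index xs i + (if xs ! i = xs ! Suc i then 0 else 1)"
proof -
  have "take (Suc (Suc i)) xs = take i xs @ [xs ! i, xs ! Suc i]"
    and "take (Suc i) xs = take i xs @ [xs ! i]"
    using assms by (simp_all add: take_Suc_conv_app_nth)
  then show ?thesis
    by (simp add: run_index_def remdups_adj_append_two)
qed

lemma run_index_mono:
  assumes "i \<le> j" "j < length xs"
  shows "run_index xs i \<le> run_index xs j"
  using assms by (induction j rule: dec_induct) (auto simp: run_index_Suc)

lemma run_index_less_length_remdups_adj:
  assumes "i < length xs"
  shows "run_index xs i < length (remdups_adj xs)"
proof -
  have "run_index xs i \<le> run_index xs (length xs - 1)"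
    using assms by (intro run_index_mono) auto
  also have "\<dots> = length (remdups_adj xs) - 1"
    using assms by (simp add: run_index_def)
  finally show ?thesis
    using assms remdups_adj_length_ge1[of xs] by fastforce
qed

lemma run_index_eq_imp_nth_eq:
  assumes "i \<le> j" "j < length xs" "run_index xs i = run_index xs j" "i \<le> w" "w \<le> j"
  shows "xs ! w = xs ! j"
  using assms
proof (induction j)
  case 0
  then show ?case by simp
next
  case (Suc j)
  show ?case
  proof (cases "w = Suc j")
    case False
    then have "i \<le> j" "w \<le> j" using Suc.prems by auto
    have "run_index xs i \<le> run_index xs j" "run_index xs j \<le> run_index xs (Suc j)"
      using \<open>i \<le> j\<close> \<open>Suc j < length xs\<close> by (simp_all add: run_index_mono)
    then have "run_index xs j = run_index xs i" and "xs ! j = xs ! Suc j"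
      using Suc.prems(3) run_index_Suc[OF \<open>Suc j < length xs\<close>] by (auto split: if_splits)
    then show ?thesis
      using Suc.IH Suc.prems(2,4) \<open>i \<le> j\<close> \<open>w \<le> j\<close> by simp
  qed simp
qed

definition twins :: "('v \<Rightarrow> 'v \<Rightarrow> bool) \<Rightarrow> 'v set \<Rightarrow> 'v \<Rightarrow> 'v \<Rightarrow> bool" where
  "twins E V u v \<longleftrightarrow> (\<forall>w \<in> V - {u, v}. E u w \<longleftrightarrow> E v w)"

lemma twins_sym: "twins E V u v \<longleftrightarrow> twins E V v u"
  unfolding twins_def by blast

lemma twins_antireg:
  assumes "u < v" "v < n" "twins (antireg_adj n) {..<n} u v"
  shows "u = 0 \<and> v = 1"
proof (rule ccontr)
  assume not01: "\<not> (u = 0 \<and> v = 1)"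
  let ?a = "antireg_string n"
  obtain w where w: "w < v" "w \<noteq> u" "?a ! max u w \<noteq> ?a ! v"
  proof (cases "Suc u < v")
    case True
    then have "u < v - 1" "v - 1 < v" by auto
    then show thesis
      using that[of "v - 1"] assms nth_antireg_string_Suc_neq[of "v - 1" n] by (simp add: max_def)
  next
    case False
    then have "v = Suc u" "u - 1 < u" using assms(1) not01 by auto
    then show thesis
      using that[of "u - 1"] assms nth_antireg_string_Suc_neq[of u n] by (simp add: max_def)
  qed
  moreover have "antireg_adj n u w \<longleftrightarrow> antireg_adj n v w"
    using assms(2,3) w by (simp add: twins_def)
  ultimately show False
    using assms by (auto simp: antireg_adj_def thr_adj_def max_def split: if_splits)
qed

lemma twins_thr_adj:
  assumes "S \<subseteq> {..<length b}" "x < y" "y < length b"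
    and "\<forall>w \<in> S - {x}. w < y \<longrightarrow> b ! max x w = b ! y"
  shows "twins (thr_adj b) S x y"
  using assms by (force simp: twins_def thr_adj_def max_def)

lemma twins_reflect:
  assumes "inj_on f V" "\<forall>u\<in>V. \<forall>v\<in>V. G (f u) (f v) \<longleftrightarrow> H u v"
    and "u \<in> V" "v \<in> V" "twins G (f ` V) (f u) (f v)"
  shows "twins H V u v"
  unfolding twins_def
proof
  fix w assume w: "w \<in> V - {u, v}"
  then have "f w \<in> f ` V - {f u, f v}"
    using assms(1,3,4) by (auto simp: inj_on_eq_iff)
  then have "G (f u) (f w) \<longleftrightarrow> G (f v) (f w)"
    using assms(5) by (simp add: twins_def)
  then show "H u w \<longleftrightarrow> H v w"
    using assms(2-4) w by auto
qed

lemma antireg_copy_twins: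
  assumes inj: "inj_on f {..<n}"
    and adj: "\<forall>u<n. \<forall>v<n. thr_adj b (f u) (f v) \<longleftrightarrow> antireg_adj n u v"
    and "p \<in> f ` {..<n}" "q \<in> f ` {..<n}" "p < q"
    and "twins (thr_adj b) (f ` {..<n}) p q"
  shows "{p, q} = {f 0, f 1}"
proof -
  obtain u v where u: "u < n" "p = f u" and v: "v < n" "q = f v"
    using assms(3,4) by blast
  have "twins (antireg_adj n) {..<n} u v"
    by (rule twins_reflect[OF inj]) (use adj u v assms(6) in auto)
  then have "{u, v} = {0, 1}"
  proof (cases "u < v")
    case True
    then show ?thesis using twins_antireg v(1) \<open>twins (antireg_adj n) {..<n} u v\<close> by auto
  next
    case False
    then have "v < u" using u v \<open>p < q\<close> by (cases "u = v") auto
    moreover have "twins (antireg_adj n) {..<n} v u"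
      using \<open>twins (antireg_adj n) {..<n} u v\<close> twins_sym by metis
    ultimately show ?thesis using twins_antireg u(1) by auto
  qed
  then show ?thesis
    using u(2) v(2) image_insert[of f u "{v}"] by simp
qed

lemma antireg_copy_not_constant_between:
  assumes inj: "inj_on f {..<n}" and image: "f ` {..<n} \<subseteq> {..<length b}"
    and adj: "\<forall>u<n. \<forall>v<n. thr_adj b (f u) (f v) \<longleftrightarrow> antireg_adj n u v"
    and xy: "x \<in> f ` {..<n}" "y \<in> f ` {..<n}" "Min (f ` {..<n}) < x" "x < y"
    and flat: "\<forall>w. x \<le> w \<and> w \<le> y \<longrightarrow> b ! w = b ! y"
  shows False
proof -
  let ?S = "f ` {..<n}"
  define s0 where "s0 = Min ?S"
  define s1 where "s1 = Min (?S - {s0})"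
  have "x \<in> ?S - {s0}"
    using xy by (auto simp: s0_def)
  have "s0 \<in> ?S"
    using xy(1) unfolding s0_def by (intro Min_in) auto
  have "s1 \<in> ?S - {s0}"
    using \<open>x \<in> ?S - {s0}\<close> unfolding s1_def by (intro Min_in) auto
  have "s1 \<le> x"
    using \<open>x \<in> ?S - {s0}\<close> unfolding s1_def by (intro Min_le) auto
  have "s0 \<le> s1"
    using \<open>s1 \<in> ?S - {s0}\<close> unfolding s0_def by (intro Min_le) auto
  then have "s0 < s1"
    using \<open>s1 \<in> ?S - {s0}\<close> by auto
  have "y < length b" using image xy by auto
  have "twins (thr_adj b) ?S s0 s1"
  proof (rule twins_thr_adj[OF image \<open>s0 < s1\<close>])
    show "s1 < length b" using image \<open>s1 \<in> ?S - {s0}\<close> by auto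
    have "s1 \<le> w" if "w \<in> ?S - {s0}" for w
      using that unfolding s1_def by (intro Min_le) auto
    then show "\<forall>w \<in> ?S - {s0}. w < s1 \<longrightarrow> b ! max s0 w = b ! s1"
      using leD by blast
  qed
  then have s01: "{s0, s1} = {f 0, f 1}"
    using \<open>s1 \<in> ?S - {s0}\<close> by (intro antireg_copy_twins[OF inj adj \<open>s0 \<in> ?S\<close> _ \<open>s0 < s1\<close>]) auto
  have "b ! max x w = b ! y" if "w < y" for w
    using that xy(4) by (intro flat[rule_format]) simp
  then have "{x, y} = {f 0, f 1}"
    by (intro antireg_copy_twins[OF inj adj xy(1,2,4)] twins_thr_adj[OF image xy(4)])
      (auto simp: \<open>y < length b\<close>)
  then have "s0 \<in> {x, y}"
    by (simp only: s01[symmetric]) simp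
  then show False
    using xy(3,4) by (auto simp: s0_def)
qed

lemma induced_subgraph_of_antireg_le_runs:
  assumes "induced_subgraph_of n (antireg_adj n) (length b) (thr_adj b)"
  shows "n \<le> length (remdups_adj (tl b)) + 1"
proof -
  obtain f where inj: "inj_on f {..<n}" and image: "f ` {..<n} \<subseteq> {..<length b}"
    and adj: "\<forall>u<n. \<forall>v<n. thr_adj b (f u) (f v) \<longleftrightarrow> antireg_adj n u v"
    using assms unfolding induced_subgraph_of_def by blast
  let ?S = "f ` {..<n}"
  let ?S' = "?S - {Min ?S}"
  let ?idx = "\<lambda>x. run_index (tl b) (x - 1)"
  have S': "Min ?S < x \<and> x < length b" if "x \<in> ?S'" for x
    using that image Min_le[of ?S x] by (auto simp: le_less)
  have idx_neq: "?idx x \<noteq> ?idx y" if "x \<in> ?S'" "y \<in> ?S'" "x < y" for x y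
  proof
    assume "?idx x = ?idx y"
    have "b ! w = b ! y" if "x \<le> w" "w \<le> y" for w
    proof -
      have "0 < w" "y < length b"
        using S'[OF \<open>x \<in> ?S'\<close>] S'[OF \<open>y \<in> ?S'\<close>] that by auto
      then have "tl b ! (w - 1) = b ! w" "tl b ! (y - 1) = b ! y"
        using that by (auto simp: nth_tl)
      moreover have "tl b ! (w - 1) = tl b ! (y - 1)"
        using \<open>?idx x = ?idx y\<close> \<open>y < length b\<close> \<open>x < y\<close> that
        by (intro run_index_eq_imp_nth_eq[of "x - 1" "y - 1"]) auto
      ultimately show ?thesis by simp
    qed
    then show False
      using antireg_copy_not_constant_between[OF inj image adj] that S' by blast
  qed
  have "inj_on ?idx ?S'"
    by (rule inj_onI) (metis idx_neq linorder_neqE_nat)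
  moreover have "?idx ` ?S' \<subseteq> {..<length (remdups_adj (tl b))}"
  proof
    fix z assume "z \<in> ?idx ` ?S'"
    then obtain x where "x \<in> ?S'" "z = ?idx x" by blast
    have "x - 1 < length (tl b)"
      using S'[OF \<open>x \<in> ?S'\<close>] by auto
    then show "z \<in> {..<length (remdups_adj (tl b))}"
      using run_index_less_length_remdups_adj \<open>z = ?idx x\<close> by blast
  qed
  ultimately have "card ?S' \<le> length (remdups_adj (tl b))"
    using card_inj_on_le[of ?idx ?S' "{..<length (remdups_adj (tl b))}"] by simp
  moreover have "card ?S' = n - 1"
  proof (cases "n = 0")
    case False
    then have "Min ?S \<in> ?S" by (intro Min_in) auto
    then show ?thesis using inj by (simp add: card_image)
  qed simp
  ultimately show ?thesis by linarith
qed

lemma induced_subgraph_of_antireg_runs: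
  assumes "b \<noteq> []" "last b"
  defines "n \<equiv> length (remdups_adj (tl b)) + 1"
  shows "induced_subgraph_of n (antireg_adj n) (length b) (thr_adj b)"
proof -
  let ?r = "remdups_adj (tl b)"
  have "antireg_string n = False # ?r"
    unfolding n_def
  proof (simp only: Suc_eq_plus1[symmetric], rule antireg_string_alternating)
    show "last ?r" if "?r \<noteq> []"
      using that assms(1,2) by (simp add: last_tl)
    show "?r ! i \<noteq> ?r ! Suc i" if "Suc i < length ?r" for i
      using that by (rule remdups_adj_adjacent)
  qed
  moreover have "subseq (hd b # ?r) b"
    using assms(1) subseq_remdups_adj[of "tl b"] by (metis list.collapse subseq_Cons2)
  ultimately show ?thesis
    using induced_subgraph_of_thr_adj_subseq[of "hd b # ?r" b]
    by (simp add: antireg_adj_def n_def thr_adj_Cons_eq[of False _ "hd b"])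
qed

lemma block_string_Suc:
  "block_string (Suc k) s t = block_string k s t @ replicate (s k) False @ replicate (t k) True"
  by (simp add: block_string_def)

lemma block_string_first_block:
  "0 < k \<Longrightarrow> \<exists>rest. block_string k s t = replicate (s 0) False @ replicate (t 0) True @ rest"
  by (auto simp: block_string_def upt_conv_Cons)

lemma last_block_string: "0 < k \<Longrightarrow> 0 < t (k - 1) \<Longrightarrow> last (block_string k s t)"
  by (cases k) (simp_all add: block_string_Suc)

lemma length_remdups_adj_block_string:
  assumes "\<forall>i<k. 0 < s i \<and> 0 < t i"
  shows "length (remdups_adj (block_string k s t)) = 2 * k"
  using assms
proof (induction k)
  case 0
  then show ?case by (simp add: block_string_def)
next
  case (Suc k)
  have "remdups_adj (replicate (s k) False @ replicate (t k) True) = [False, True]"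
    using Suc.prems by (simp add: remdups_adj_append_neq remdups_adj_replicate)
  moreover have "remdups_adj (block_string (Suc k) s t) =
      remdups_adj (block_string k s t) @ remdups_adj (replicate (s k) False @ replicate (t k) True)"
  proof (cases k)
    case 0
    then show ?thesis by (simp add: block_string_def)
  next
    case (Suc k')
    then have "block_string k s t \<noteq> []" "last (block_string k s t)"
      using Suc.prems last_block_string[of k t s] by (auto simp: block_string_Suc)
    then show ?thesis
      using Suc.prems unfolding block_string_Suc by (intro remdups_adj_append_neq) auto
  qed
  ultimately show ?case
    using Suc by simp
qed

lemma length_remdups_adj_tl_block_string:
  assumes "0 < k" "\<forall>i<k. 0 < s i \<and> 0 < t i"
  shows "length (remdups_adj (tl (block_string k s t))) + 1 = (if s 0 = 1 then 2 * k else 2 * k + 1)"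
proof -
  obtain rest where b: "block_string k s t = replicate (s 0) False @ replicate (t 0) True @ rest"
    using block_string_first_block[OF assms(1)] by blast
  have "0 < s 0" "0 < t 0" using assms by auto
  then have b_Cons: "block_string k s t = False # tl (block_string k s t)"
    and "tl (block_string k s t) \<noteq> []"
    and "hd (tl (block_string k s t)) \<longleftrightarrow> s 0 = 1"
    unfolding b by (cases "s 0"; cases "s 0 - 1"; simp)+
  have "2 * k = length (remdups_adj (False # tl (block_string k s t)))"
    using length_remdups_adj_block_string[OF assms(2)] b_Cons by metis
  also have "\<dots> = length (remdups_adj (tl (block_string k s t))) + (if s 0 = 1 then 1 else 0)"
    using \<open>tl (block_string k s t) \<noteq> []\<close> \<open>hd (tl (block_string k s t)) \<longleftrightarrow> s 0 = 1\<close>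
    by (simp only: length_remdups_adj_Cons) simp
  finally show ?thesis
    using assms(1) by simp
qed

theorem theorem3p2:
  fixes k :: nat and s t :: "nat \<Rightarrow> nat" and b :: "bool list" and m :: nat
  assumes "k \<ge> 1"
    and "\<forall>i<k. s i \<ge> 1 \<and> t i \<ge> 1"
    and "b = block_string k s t"
    and "graph_connected (length b) (thr_adj b)"
    and "m = (if s 0 = 1 then 2 * k else 2 * k + 1)"
  shows "induced_subgraph_of m (antireg_adj m) (length b) (thr_adj b) \<and>
         (\<forall>m'. induced_subgraph_of m' (antireg_adj m') (length b) (thr_adj b) \<longrightarrow> m' \<le> m)"
proof -
  have blocks: "0 < k" "\<forall>i<k. 0 < s i \<and> 0 < t i"
    using assms(1,2) by auto
  have "b \<noteq> []"
    using length_remdups_adj_block_string[OF blocks(2)] blocks(1) assms(3) by auto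
  moreover have "last b"
    using last_block_string[of k t s] blocks assms(3) by simp
  moreover have "m = length (remdups_adj (tl b)) + 1"
    using length_remdups_adj_tl_block_string[OF blocks] assms(3,5) by simp
  ultimately show ?thesis
    using induced_subgraph_of_antireg_runs induced_subgraph_of_antireg_le_runs by auto
qed

end
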